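(* Let $\Gamma\in\mathcal S$ with embedding $\varphi$ into $\mathbb Z^n$. If some vertex $v$ satisfies $\varphi(v)=-2E_{i_v}-\sum_{j\in J_v}E_j$ (with $i_v\notin J_v$), then every other vertex $w\ne v$ satisfies $\varphi(w)=E_{i_w}-\sum_{j\in J_w}E_j$ for some index $i_w\notin J_w$.
   Context: A plumbing tree is a finite tree $\Gamma$ each of whose vertices $v$ carries an integer decoration $d(v)$. $\Gamma$ is minimal if no vertex has decoration $-1$. For $n\ge 1$ let $(\mathbb Z^n,Q_n)$ be the lattice with basis $E_1,\dots,E_n$ and $Q_n(E_i,E_j)=-\delta_{ij}$, and let $K=\sum_{i=1}^n E_i$. A plumbing tree $\Gamma$ on $n$ vertices is a symplectic plumbing tree if there is a map $\varphi$ (an embedding) from its vertex set to $\mathbb Z^n$ such that: for distinct vertices $v_1,v_2$, $Q_n(\varphi(v_1),\varphi(v_2))$ is $1$ if they are adjacent and $0$ otherwise; $Q_n(\varphi(v),\varphi(v))=d(v)$ for every $v$; and $Q_n(\varphi(v),K)+Q_n(\varphi(v),\varphi(v))=-2$ for every $v$. $\mathcal S$ is the set of minimal, connected symplectic plumbing trees. *)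

theory Defs
  imports Main
begin

text \<open>Vectors of the lattice Z^n are represented as functions nat => int
  supported on the index set {0..<n}; E i is the i-th standard basis vector
  (indices are 0-based).\<close>

definition in_lattice :: "nat \<Rightarrow> (nat \<Rightarrow> int) \<Rightarrow> bool" where
  "in_lattice n x \<longleftrightarrow> (\<forall>i\<ge>n. x i = 0)"

definition Q :: "nat \<Rightarrow> (nat \<Rightarrow> int) \<Rightarrow> (nat \<Rightarrow> int) \<Rightarrow> int" where
  "Q n x y = - (\<Sum>i<n. x i * y i)"

definition E :: "nat \<Rightarrow> nat \<Rightarrow> int" where
  "E i = (\<lambda>k. if k = i then 1 else 0)"

definition Kvec :: "nat \<Rightarrow> nat \<Rightarrow> int" where
  "Kvec n = (\<lambda>k. if k < n then 1 else 0)"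

definition simple_graph :: "'v set \<Rightarrow> ('v \<Rightarrow> 'v \<Rightarrow> bool) \<Rightarrow> bool" where
  "simple_graph V Adj \<longleftrightarrow> finite V \<and>
     (\<forall>x y. Adj x y \<longrightarrow> x \<in> V \<and> y \<in> V) \<and>
     (\<forall>x y. Adj x y \<longrightarrow> Adj y x) \<and> (\<forall>x. \<not> Adj x x)"

definition graph_connected :: "'v set \<Rightarrow> ('v \<Rightarrow> 'v \<Rightarrow> bool) \<Rightarrow> bool" where
  "graph_connected V Adj \<longleftrightarrow> V \<noteq> {} \<and> (\<forall>x\<in>V. \<forall>y\<in>V. Adj\<^sup>*\<^sup>* x y)"

definition is_cycle :: "('v \<Rightarrow> 'v \<Rightarrow> bool) \<Rightarrow> 'v list \<Rightarrow> bool" where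
  "is_cycle Adj cs \<longleftrightarrow> length cs \<ge> 3 \<and> distinct cs \<and>
     (\<forall>i. Suc i < length cs \<longrightarrow> Adj (cs ! i) (cs ! Suc i)) \<and>
     Adj (last cs) (hd cs)"

definition is_tree :: "'v set \<Rightarrow> ('v \<Rightarrow> 'v \<Rightarrow> bool) \<Rightarrow> bool" where
  "is_tree V Adj \<longleftrightarrow> simple_graph V Adj \<and> graph_connected V Adj \<and>
     (\<nexists>cs. is_cycle Adj cs)"

definition symplectic_embedding ::
  "'v set \<Rightarrow> ('v \<Rightarrow> 'v \<Rightarrow> bool) \<Rightarrow> ('v \<Rightarrow> int) \<Rightarrow> ('v \<Rightarrow> nat \<Rightarrow> int) \<Rightarrow> bool" where
  "symplectic_embedding V Adj d \<phi> \<longleftrightarrow>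
     (let n = card V in
       (\<forall>v\<in>V. in_lattice n (\<phi> v)) \<and>
       (\<forall>v1\<in>V. \<forall>v2\<in>V. v1 \<noteq> v2 \<longrightarrow> Q n (\<phi> v1) (\<phi> v2) = (if Adj v1 v2 then 1 else 0)) \<and>
       (\<forall>v\<in>V. Q n (\<phi> v) (\<phi> v) = d v) \<and>
       (\<forall>v\<in>V. Q n (\<phi> v) (Kvec n) + Q n (\<phi> v) (\<phi> v) = -2))"

definition symplectic_plumbing_tree ::
  "'v set \<Rightarrow> ('v \<Rightarrow> 'v \<Rightarrow> bool) \<Rightarrow> ('v \<Rightarrow> int) \<Rightarrow> bool" where
  "symplectic_plumbing_tree V Adj d \<longleftrightarrow> is_tree V Adj \<and> (\<exists>\<phi>. symplectic_embedding V Adj d \<phi>)"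

definition minimal_plumbing :: "'v set \<Rightarrow> ('v \<Rightarrow> int) \<Rightarrow> bool" where
  "minimal_plumbing V d \<longleftrightarrow> (\<forall>v\<in>V. d v \<noteq> -1)"

text \<open>Membership in the class S (trees are connected by definition).\<close>

definition in_S :: "'v set \<Rightarrow> ('v \<Rightarrow> 'v \<Rightarrow> bool) \<Rightarrow> ('v \<Rightarrow> int) \<Rightarrow> bool" where
  "in_S V Adj d \<longleftrightarrow> minimal_plumbing V d \<and> graph_connected V Adj \<and>
     symplectic_plumbing_tree V Adj d"

end

theory Submission
  imports Defs
begin

text \<open>The adjunction condition says that every vertex vector \<open>x\<close> satisfies
  \<open>\<Sum>\<^sub>l x\<^sub>l\<^sup>2 + x\<^sub>l = 2\<close>. Each summand is nonnegative, so at most one coordinate of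
  \<open>x\<close> is positive, and if there is one it equals 1 and all others lie in \<open>{0, -1}\<close>.
  Let \<open>v = u\<^sub>0, \<dots>, u\<^sub>n = w\<close> be a shortest path, so that \<open>u\<^bsub>k+1\<^esub>\<close> is
  adjacent to \<open>u\<^sub>k\<close> but to no earlier vertex. Then the partial sums
  \<open>\<phi>(u\<^sub>0) + \<dots> + \<phi>(u\<^sub>k)\<close> stay nonpositive: such a sum has Euclidean product
  \<open>-1\<close> with \<open>\<phi>(u\<^bsub>k+1\<^esub>)\<close>, which is only possible if the positive coordinate
  of \<open>\<phi>(u\<^bsub>k+1\<^esub>)\<close> meets a negative coordinate of the sum. Taking \<open>k = n - 1\<close>,
  the same product \<open>-1\<close> forces \<open>\<phi>(w)\<close> to have a positive coordinate.\<close>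

lemma sq_add_self_nonneg: "0 \<le> (x::int) * x + x"
proof (cases "x \<ge> 0")
  case False
  then have "0 \<le> (- x) * (- x - 1)" by (intro mult_nonneg_nonneg) auto
  then show ?thesis by (simp add: algebra_simps)
qed simp

lemma sq_add_self_eq_0_iff: "(x::int) * x + x = 0 \<longleftrightarrow> x = 0 \<or> x = -1"
proof -
  have "x * x + x = x * (x + 1)" by (simp add: algebra_simps)
  then show ?thesis by auto
qed

lemma adjunction_vector_pos_coord:
  fixes x :: "nat \<Rightarrow> int"
  assumes adj: "(\<Sum>l<N. x l * x l + x l) = 2" and c: "c < N" "0 < x c"
  shows "x c = 1" and "\<And>l. l < N \<Longrightarrow> l \<noteq> c \<Longrightarrow> x l = 0 \<or> x l = -1"
proof -
  have "x c * x c + x c \<le> 2"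
    using member_le_sum[of c "{..<N}" "\<lambda>l. x l * x l + x l"] sq_add_self_nonneg adj c by simp
  moreover have "x c * x c \<ge> x c" using c by simp
  ultimately show xc: "x c = 1" using c by linarith
  have "(\<Sum>l\<in>{..<N} - {c}. x l * x l + x l) = 0"
    using sum.remove[of "{..<N}" c "\<lambda>l. x l * x l + x l"] adj c xc by simp
  then have "\<forall>l\<in>{..<N} - {c}. x l * x l + x l = 0"
    by (simp add: sum_nonneg_eq_0_iff sq_add_self_nonneg)
  then show "\<And>l. l < N \<Longrightarrow> l \<noteq> c \<Longrightarrow> x l = 0 \<or> x l = -1"
    by (simp add: sq_add_self_eq_0_iff)
qed

lemma adjunction_vector_nonpos_add:
  fixes s u :: "nat \<Rightarrow> int"
  assumes adj: "(\<Sum>l<N. u l * u l + u l) = 2" and s: "\<forall>l<N. s l \<le> 0"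
    and inner: "(\<Sum>l<N. s l * u l) = -1"
  shows "\<forall>l<N. s l + u l \<le> 0"
proof (intro allI impI, rule ccontr)
  fix c assume c: "c < N" and "\<not> s c + u c \<le> 0"
  then have "0 < u c" using s by force
  then have uc: "u c = 1" and others: "\<And>l. l < N \<Longrightarrow> l \<noteq> c \<Longrightarrow> u l \<le> 0"
    using adjunction_vector_pos_coord[OF adj c] by force+
  have "\<forall>l\<in>{..<N}. 0 \<le> s l * u l"
  proof
    fix l assume l: "l \<in> {..<N}"
    show "0 \<le> s l * u l"
    proof (cases "l = c")
      case True
      then show ?thesis using \<open>\<not> s c + u c \<le> 0\<close> uc by simp
    next
      case False
      then show ?thesis using l s others by (simp add: mult_nonpos_nonpos)
    qed
  qed
  then have "0 \<le> (\<Sum>l<N. s l * u l)" by (intro sum_nonneg) auto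
  then show False using inner by simp
qed

lemma sum_E_eq: "finite J \<Longrightarrow> (\<Sum>j\<in>J. E j k) = (if k \<in> J then 1 else 0)"
  by (simp add: E_def sum.delta')

lemma adjunction_vector_eq_E_minus_sum_E:
  fixes x :: "nat \<Rightarrow> int"
  assumes adj: "(\<Sum>l<N. x l * x l + x l) = 2" and supp: "\<forall>l\<ge>N. x l = 0"
    and c: "c < N" "0 < x c"
  shows "x = (\<lambda>k. E c k - (\<Sum>j\<in>{l. l < N \<and> x l = -1}. E j k))"
proof
  fix k
  have "x c = 1" using adjunction_vector_pos_coord(1)[OF adj c] .
  moreover have "x k = 0 \<or> x k = -1" if "k < N" "k \<noteq> c"
    using adjunction_vector_pos_coord(2)[OF adj c] that .
  ultimately show "x k = E c k - (\<Sum>j\<in>{l. l < N \<and> x l = -1}. E j k)"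
    using supp c by (cases "k < N") (auto simp: sum_E_eq E_def)
qed

lemma relpowp_chain:
  assumes "\<forall>k<n. R (f k) (f (Suc k))" "i \<le> j" "j \<le> n"
  shows "(R ^^ (j - i)) (f i) (f j)"
  unfolding relpowp_fun_conv
  by (rule exI[of _ "\<lambda>k. f (i + k)"]) (use assms in auto)

lemma relpowp_chain_shortcut:
  assumes chain: "\<forall>k<n. R (f k) (f (Suc k))" and "i \<le> j" "j \<le> n"
    and "(R ^^ m) (f i) (f j)"
  shows "(R ^^ (i + m + (n - j))) (f 0) (f n)"
proof -
  have "(R ^^ i) (f 0) (f i)"
    using relpowp_chain[where R = R and f = f, OF chain, of 0 i] assms(2,3) by simp
  moreover have "(R ^^ (n - j)) (f j) (f n)"
    using relpowp_chain[where R = R and f = f, OF chain, of j n] assms(3) by simp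
  ultimately have "((R ^^ i OO R ^^ m) OO R ^^ (n - j)) (f 0) (f n)"
    using assms(4) by (blast intro: relcomppI)
  then show ?thesis by (simp only: relpowp_add)
qed

lemma shortest_path_exists:
  assumes "R\<^sup>*\<^sup>* v w"
  obtains n f where "f 0 = v" "f n = w" "\<forall>k<n. R (f k) (f (Suc k))"
    "\<And>i j. i < j \<Longrightarrow> j \<le> n \<Longrightarrow> f i \<noteq> f j"
    "\<And>i j. Suc i < j \<Longrightarrow> j \<le> n \<Longrightarrow> \<not> R (f i) (f j)"
proof -
  define n where "n = (LEAST n. (R ^^ n) v w)"
  have "(R ^^ n) v w"
    unfolding n_def using assms by (metis LeastI rtranclp_imp_relpowp)
  then obtain f where f: "f 0 = v" "f n = w" and chain: "\<forall>k<n. R (f k) (f (Suc k))"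
    unfolding relpowp_fun_conv by blast
  have shorter: "\<not> (R ^^ m) v w" if "m < n" for m
    using not_less_Least[of m] that n_def by blast
  have shortcut: "(R ^^ (i + m + (n - j))) v w" if "i \<le> j" "j \<le> n" "(R ^^ m) (f i) (f j)"
    for i j m
    using relpowp_chain_shortcut[where R = R and f = f and n = n, OF chain that] f by simp
  show thesis
  proof (rule that[OF f chain])
    fix i j assume ij: "i < j" "j \<le> n"
    show "f i \<noteq> f j"
    proof
      assume "f i = f j"
      then have "(R ^^ (i + 0 + (n - j))) v w" using ij by (intro shortcut) auto
      then show False using shorter[of "i + 0 + (n - j)"] ij by linarith
    qed
  next
    fix i j assume ij: "Suc i < j" "j \<le> n"
    show "\<not> R (f i) (f j)"
    proof
      assume "R (f i) (f j)"
      then have "(R ^^ (i + 1 + (n - j))) v w" using ij by (intro shortcut) auto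
      then show False using shorter[of "i + 1 + (n - j)"] ij by linarith
    qed
  qed
qed

lemma path_partial_sums_nonpos:
  fixes x :: "nat \<Rightarrow> nat \<Rightarrow> int"
  assumes adj: "\<And>k. 0 < k \<Longrightarrow> k \<le> n \<Longrightarrow> (\<Sum>l<N. x k l * x k l + x k l) = 2"
    and inner: "\<And>i j. i < j \<Longrightarrow> j \<le> n \<Longrightarrow>
      (\<Sum>l<N. x i l * x j l) = (if j = Suc i then -1 else 0)"
    and start: "\<forall>l<N. x 0 l \<le> 0"
  shows "k \<le> n \<Longrightarrow> \<forall>l<N. (\<Sum>i\<le>k. x i l) \<le> 0"
proof (induction k)
  case 0
  then show ?case using start by simp
next
  case (Suc k)
  have "(\<Sum>l<N. (\<Sum>i\<le>k. x i l) * x (Suc k) l) = (\<Sum>i\<le>k. \<Sum>l<N. x i l * x (Suc k) l)"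
    by (simp add: sum_distrib_right sum.swap[of _ "{..<N}"])
  also have "\<dots> = (\<Sum>i\<le>k. if i = k then -1 else 0)"
    using Suc.prems by (intro sum.cong) (auto simp: inner)
  also have "\<dots> = -1" by simp
  finally have "\<forall>l<N. (\<Sum>i\<le>k. x i l) + x (Suc k) l \<le> 0"
    using adjunction_vector_nonpos_add[OF adj[of "Suc k"]] Suc by simp
  then show ?case by simp
qed

lemma path_end_has_pos_coord:
  fixes x :: "nat \<Rightarrow> nat \<Rightarrow> int"
  assumes adj: "\<And>k. 0 < k \<Longrightarrow> k \<le> n \<Longrightarrow> (\<Sum>l<N. x k l * x k l + x k l) = 2"
    and inner: "\<And>i j. i < j \<Longrightarrow> j \<le> n \<Longrightarrow>
      (\<Sum>l<N. x i l * x j l) = (if j = Suc i then -1 else 0)"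
    and start: "\<forall>l<N. x 0 l \<le> 0" and "0 < n"
  shows "\<exists>l<N. 0 < x n l"
proof (rule ccontr)
  assume "\<not> (\<exists>l<N. 0 < x n l)"
  then have "\<forall>l<N. x n l \<le> 0" by auto
  moreover have "\<forall>l<N. (\<Sum>i\<le>n - 1. x i l) \<le> 0"
    using path_partial_sums_nonpos[OF adj inner start] by simp
  ultimately have "0 \<le> (\<Sum>l<N. (\<Sum>i\<le>n - 1. x i l) * x n l)"
    by (intro sum_nonneg) (simp add: mult_nonpos_nonpos)
  also have "\<dots> = (\<Sum>i\<le>n - 1. \<Sum>l<N. x i l * x n l)"
    by (simp add: sum_distrib_right sum.swap[of _ "{..<N}"])
  also have "\<dots> = (\<Sum>i\<le>n - 1. if i = n - 1 then -1 else 0)"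
    using \<open>0 < n\<close> by (intro sum.cong) (auto simp: inner)
  finally show False by simp
qed

lemma symplectic_embedding_support:
  "symplectic_embedding V Adj d \<phi> \<Longrightarrow> v \<in> V \<Longrightarrow> \<forall>l\<ge>card V. \<phi> v l = 0"
  unfolding symplectic_embedding_def Let_def in_lattice_def by blast

lemma symplectic_embedding_inner:
  assumes "symplectic_embedding V Adj d \<phi>" "a \<in> V" "b \<in> V" "a \<noteq> b"
  shows "(\<Sum>l<card V. \<phi> a l * \<phi> b l) = (if Adj a b then -1 else 0)"
proof -
  have "Q (card V) (\<phi> a) (\<phi> b) = (if Adj a b then 1 else 0)"
    using assms unfolding symplectic_embedding_def Let_def by blast
  then show ?thesis unfolding Q_def by (simp split: if_splits)
qed

lemma symplectic_embedding_adjunction: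
  assumes "symplectic_embedding V Adj d \<phi>" "a \<in> V"
  shows "(\<Sum>l<card V. \<phi> a l * \<phi> a l + \<phi> a l) = 2"
proof -
  have "Q (card V) (\<phi> a) (Kvec (card V)) + Q (card V) (\<phi> a) (\<phi> a) = -2"
    using assms unfolding symplectic_embedding_def Let_def by blast
  moreover have "(\<Sum>l<card V. \<phi> a l * Kvec (card V) l) = (\<Sum>l<card V. \<phi> a l)"
    by (simp add: Kvec_def)
  ultimately show ?thesis unfolding Q_def by (simp add: sum.distrib)
qed

lemma symplectic_embedding_pos_coord:
  assumes emb: "symplectic_embedding V Adj d \<phi>" and graph: "simple_graph V Adj"
    and conn: "graph_connected V Adj"
    and v: "v \<in> V" "\<forall>l<card V. \<phi> v l \<le> 0" and w: "w \<in> V" "w \<noteq> v"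
  shows "\<exists>l<card V. 0 < \<phi> w l"
proof -
  have "Adj\<^sup>*\<^sup>* v w" using conn v w unfolding graph_connected_def by blast
  then obtain n f where f: "f 0 = v" "f n = w" and chain: "\<forall>k<n. Adj (f k) (f (Suc k))"
    and distinct: "\<And>i j. i < j \<Longrightarrow> j \<le> n \<Longrightarrow> f i \<noteq> f j"
    and chordless: "\<And>i j. Suc i < j \<Longrightarrow> j \<le> n \<Longrightarrow> \<not> Adj (f i) (f j)"
    using shortest_path_exists by metis
  have n: "0 < n" using f w by (cases n) auto
  have fV: "f k \<in> V" if "k \<le> n" for k
  proof (cases "k < n")
    case True
    then show ?thesis using chain graph unfolding simple_graph_def by blast
  next
    case False
    then show ?thesis using that f w by simp
  qed
  show ?thesis unfolding f(2)[symmetric]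
  proof (rule path_end_has_pos_coord[OF _ _ _ n])
    show "(\<Sum>l<card V. \<phi> (f k) l * \<phi> (f k) l + \<phi> (f k) l) = 2" if "k \<le> n" for k
      using symplectic_embedding_adjunction[OF emb fV[OF that]] .
    show "(\<Sum>l<card V. \<phi> (f i) l * \<phi> (f j) l) = (if j = Suc i then -1 else 0)"
      if "i < j" "j \<le> n" for i j
      using symplectic_embedding_inner[OF emb fV fV distinct] chain chordless that
      by (cases "j = Suc i") auto
  qed (use v f in simp)
qed

theorem proposition3p4:
  fixes V :: "'v set" and Adj :: "'v \<Rightarrow> 'v \<Rightarrow> bool" and d :: "'v \<Rightarrow> int"
    and \<phi> :: "'v \<Rightarrow> nat \<Rightarrow> int" and v :: 'v and iv :: nat and Jv :: "nat set"
  assumes "in_S V Adj d"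
    and "symplectic_embedding V Adj d \<phi>"
    and "v \<in> V"
    and "iv < card V" and "Jv \<subseteq> {..<card V}" and "iv \<notin> Jv"
    and "\<phi> v = (\<lambda>k. - 2 * E iv k - (\<Sum>j\<in>Jv. E j k))"
  shows "\<forall>w\<in>V. w \<noteq> v \<longrightarrow>
           (\<exists>iw Jw. iw < card V \<and> Jw \<subseteq> {..<card V} \<and> iw \<notin> Jw \<and>
              \<phi> w = (\<lambda>k. E iw k - (\<Sum>j\<in>Jw. E j k)))"
proof (intro ballI impI)
  fix w assume w: "w \<in> V" "w \<noteq> v"
  have graph: "simple_graph V Adj" and conn: "graph_connected V Adj"
    using assms(1) unfolding in_S_def symplectic_plumbing_tree_def is_tree_def by auto
  have v_nonpos: "\<forall>l<card V. \<phi> v l \<le> 0"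
  proof (intro allI impI)
    fix l
    have "0 \<le> E iv l" "0 \<le> (\<Sum>j\<in>Jv. E j l)" by (simp_all add: E_def sum_nonneg)
    then show "\<phi> v l \<le> 0" using assms(7) by simp
  qed
  then obtain c where c: "c < card V" "0 < \<phi> w c"
    using symplectic_embedding_pos_coord[OF assms(2) graph conn assms(3) v_nonpos w] by blast
  define Jw where "Jw = {l. l < card V \<and> \<phi> w l = -1}"
  have "\<phi> w = (\<lambda>k. E c k - (\<Sum>j\<in>Jw. E j k))"
    unfolding Jw_def
    using adjunction_vector_eq_E_minus_sum_E[OF
        symplectic_embedding_adjunction[OF assms(2) w(1)]
        symplectic_embedding_support[OF assms(2) w(1)] c] .
  moreover have "Jw \<subseteq> {..<card V}" "c \<notin> Jw" using c by (auto simp: Jw_def)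
  ultimately show "\<exists>iw Jw. iw < card V \<and> Jw \<subseteq> {..<card V} \<and> iw \<notin> Jw \<and>
      \<phi> w = (\<lambda>k. E iw k - (\<Sum>j\<in>Jw. E j k))"
    using c by blast
qed

end
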